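(* For each $n$, let $X_1,\dots,X_n$ be i.i.d. real random variables and let $s=s_n$ be a real-valued permutation-symmetric function of $n$ arguments. Conditionally on the data, let $I_1,\dots,I_n$ be i.i.d. uniform on $\{1,\dots,n\}$, $X_i^*=X_{I_i}$, $s^*=s(X_1^*,\dots,X_n^* )$, $w_j^*=\#\{i:I_i=j\}$, and let $\mathbb{E}_*,\mathrm{Var}_*$ denote expectation and variance over this resampling given the data. Let $e_i=\mathbb{E}_*[s^*\mid I_1=i]$, $s_0=\mathbb{E}_*[s^*]$, and let $l^*$ be the $L^2$ (resampling distribution) orthogonal projection of $s^*-s_0$ onto the linear span of $w_1^*,\dots,w_n^*$. Let $\rho$ be the correlation coefficient (over the distribution of the data) between $e_1$ and $e_2$. Assume $e_1$ has finite positive variance and $\mathrm{Var}(\mathbb{E}_*[s^*])>0$ for each $n$. Then $$\lim_{n\to\infty}\frac{\mathbb{E}[\mathrm{Var}_*(l^* )]}{\mathrm{Var}(\mathbb{E}_*[s^*])}=1\iff\lim_{n\to\infty}n(1-\rho)=1.$$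
   Context: $\mathbb{E}_*[s^*]$ is the bootstrap-smoothed (bagged) version of $s$. Here $\mathrm{Var}$ and $\mathbb{E}$ without star refer to the randomness of the data $X_1,\dots,X_n$. *)

theory Defs
  imports "HOL-Probability.Probability"
begin

text \<open>Indices are 0-based: data X_1..X_n are x 0 .. x (n-1); resampling indices
I_1..I_n are I 0 .. I (n-1), each uniform on {0..<n}.\<close>

definition resamples :: "nat \<Rightarrow> (nat \<Rightarrow> nat) set" where
  "resamples n = PiE {0..<n} (\<lambda>_. {0..<n})"

definition bootE :: "nat \<Rightarrow> ((nat \<Rightarrow> nat) \<Rightarrow> real) \<Rightarrow> real" where
  "bootE n g = (\<Sum>I\<in>resamples n. g I) / real n ^ n"

definition bootVar :: "nat \<Rightarrow> ((nat \<Rightarrow> nat) \<Rightarrow> real) \<Rightarrow> real" where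
  "bootVar n g = bootE n (\<lambda>I. (g I - bootE n g)^2)"

definition wcount :: "nat \<Rightarrow> nat \<Rightarrow> (nat \<Rightarrow> nat) \<Rightarrow> real" where
  "wcount n j I = real (card {i\<in>{0..<n}. I i = j})"

definition sstar :: "nat \<Rightarrow> (nat \<Rightarrow> (nat \<Rightarrow> real) \<Rightarrow> real) \<Rightarrow> (nat \<Rightarrow> real) \<Rightarrow> (nat \<Rightarrow> nat) \<Rightarrow> real" where
  "sstar n s x I = s n (\<lambda>k\<in>{0..<n}. x (I k))"

definition econd :: "nat \<Rightarrow> (nat \<Rightarrow> (nat \<Rightarrow> real) \<Rightarrow> real) \<Rightarrow> nat \<Rightarrow> (nat \<Rightarrow> real) \<Rightarrow> real" where
  "econd n s i x = (\<Sum>I\<in>{I\<in>resamples n. I 0 = i}. sstar n s x I) / real n ^ (n - 1)"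

definition szero :: "nat \<Rightarrow> (nat \<Rightarrow> (nat \<Rightarrow> real) \<Rightarrow> real) \<Rightarrow> (nat \<Rightarrow> real) \<Rightarrow> real" where
  "szero n s x = bootE n (sstar n s x)"

definition wspan :: "nat \<Rightarrow> ((nat \<Rightarrow> nat) \<Rightarrow> real) set" where
  "wspan n = {restrict (\<lambda>I. \<Sum>j<n. c j * wcount n j I) (resamples n) | c. True}"

definition wproj :: "nat \<Rightarrow> ((nat \<Rightarrow> nat) \<Rightarrow> real) \<Rightarrow> ((nat \<Rightarrow> nat) \<Rightarrow> real)" where
  "wproj n f = (THE l. l \<in> wspan n \<and>
      (\<forall>j<n. bootE n (\<lambda>I. (f I - l I) * wcount n j I) = 0))"

definition lstar :: "nat \<Rightarrow> (nat \<Rightarrow> (nat \<Rightarrow> real) \<Rightarrow> real) \<Rightarrow> (nat \<Rightarrow> real) \<Rightarrow> (nat \<Rightarrow> nat) \<Rightarrow> real" where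
  "lstar n s x = wproj n (\<lambda>I. sstar n s x I - szero n s x)"

definition dataM :: "(nat \<Rightarrow> real measure) \<Rightarrow> nat \<Rightarrow> (nat \<Rightarrow> real) measure" where
  "dataM D n = PiM {0..<n} (\<lambda>_. D n)"

definition dE :: "'a measure \<Rightarrow> ('a \<Rightarrow> real) \<Rightarrow> real" where
  "dE M X = (\<integral>x. X x \<partial>M)"

definition dVar :: "'a measure \<Rightarrow> ('a \<Rightarrow> real) \<Rightarrow> real" where
  "dVar M X = dE M (\<lambda>x. (X x - dE M X)^2)"

definition dCov :: "'a measure \<Rightarrow> ('a \<Rightarrow> real) \<Rightarrow> ('a \<Rightarrow> real) \<Rightarrow> real" where
  "dCov M X Y = dE M (\<lambda>x. (X x - dE M X) * (Y x - dE M Y))"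

definition dCorr :: "'a measure \<Rightarrow> ('a \<Rightarrow> real) \<Rightarrow> ('a \<Rightarrow> real) \<Rightarrow> real" where
  "dCorr M X Y = dCov M X Y / sqrt (dVar M X * dVar M Y)"

end

theory Submission
  imports Defs "HOL-Real_Asymp.Real_Asymp"
begin

(* Since s is symmetric, E_* [s^* w_j] = e_j, so the projection l^* is the linear statistic
   sum_i (e_{I_i} - s_0), where s_0 is the mean of the e_j, and Var_* l^* = sum_j (e_j - s_0)^2.
   Permuting the data coordinates preserves their law and permutes the e_j, so e_1, ..., e_n are
   exchangeable.  With sigma^2 = Var e_1 and c = Cov (e_1, e_2) this gives
   E [Var_* l^*] = (n - 1) (sigma^2 - c) and Var s_0 = (sigma^2 + (n - 1) c) / n, hence the ratio
   equals a (n - 1) / n / (1 - a (n - 1) / n^2) with a = n (1 - rho), which tends to 1 iff a does. *)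

lemma finite_resamples [simp]: "finite (resamples n)"
  by (simp add: resamples_def finite_PiE)

lemma bootE_cong: "(\<And>I. I \<in> resamples n \<Longrightarrow> f I = g I) \<Longrightarrow> bootE n f = bootE n g"
  by (simp add: bootE_def)

lemma bootE_diff: "bootE n (\<lambda>I. f I - g I) = bootE n f - bootE n g"
  by (simp add: bootE_def sum_subtractf diff_divide_distrib)

lemma bootE_cmult: "bootE n (\<lambda>I. c * f I) = c * bootE n f"
  by (simp add: bootE_def sum_distrib_left)

lemma bootE_sum: "bootE n (\<lambda>I. \<Sum>k\<in>K. f k I) = (\<Sum>k\<in>K. bootE n (f k))"
  by (simp add: bootE_def sum.swap[of _ K] sum_divide_distrib)

lemma sum_resamples_prod: "(\<Sum>I\<in>resamples n. \<Prod>k<n. f k (I k)) = (\<Prod>k<n. \<Sum>j<n. f k j :: real)"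
  unfolding resamples_def by (simp add: prod_sum_PiE atLeast0LessThan)

lemma bootE_coord:
  assumes "a < n"
  shows "bootE n (\<lambda>I. g (I a)) = (\<Sum>j<n. g j) / real n"
proof -
  have "(\<Sum>I\<in>resamples n. g (I a)) = (\<Sum>I\<in>resamples n. \<Prod>k<n. if k = a then g (I k) else 1)"
    using assms by simp
  also have "\<dots> = (\<Prod>k<n. \<Sum>j<n. if k = a then g j else 1)"
    by (rule sum_resamples_prod[of "\<lambda>k j. if k = a then g j else 1"])
  also have "\<dots> = (\<Prod>k<n. if k = a then (\<Sum>j<n. g j) else real n)"
    by (rule prod.cong) auto
  also have "\<dots> = (\<Sum>j<n. g j) * real n ^ (n - 1)"
    using assms by (simp add: prod.If_cases Diff_eq[symmetric])
  moreover have "real n ^ n = real n ^ (n - 1) * real n"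
    using assms power_minus_mult[of n "real n"] by simp
  ultimately show ?thesis
    using assms by (simp add: bootE_def)
qed

lemma bootE_two_coords:
  assumes "a < n" "b < n" "a \<noteq> b"
  shows "bootE n (\<lambda>I. g (I a) * h (I b)) = (\<Sum>j<n. g j) * (\<Sum>j<n. h j) / (real n)^2"
proof -
  have "(\<Sum>I\<in>resamples n. g (I a) * h (I b)) =
      (\<Sum>I\<in>resamples n. \<Prod>k<n. if k = a then g (I k) else if k = b then h (I k) else 1)"
    using assms by (simp add: prod.If_cases Diff_eq[symmetric])
  also have "\<dots> = (\<Prod>k<n. \<Sum>j<n. if k = a then g j else if k = b then h j else 1)"
    by (rule sum_resamples_prod[of "\<lambda>k j. if k = a then g j else if k = b then h j else 1"])
  also have "\<dots> = (\<Prod>k<n. if k = a then (\<Sum>j<n. g j) else if k = b then (\<Sum>j<n. h j) else real n)"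
    by (rule prod.cong) auto
  also have "\<dots> = (\<Sum>j<n. g j) * (\<Sum>j<n. h j) * real n ^ (n - 2)"
    using assms by (simp add: prod.If_cases Diff_eq[symmetric] numeral_2_eq_2)
  moreover have "real n ^ n = real n ^ (n - 2) * (real n)^2"
  proof -
    have "n - 2 + 2 = n" using assms by linarith
    then show ?thesis by (metis power_add)
  qed
  ultimately show ?thesis
    by (simp add: bootE_def)
qed

lemma bootE_coord_pair:
  assumes "a < n" "b < n"
  shows "bootE n (\<lambda>I. g (I a) * h (I b)) =
    (if a = b then (\<Sum>j<n. g j * h j) / real n else (\<Sum>j<n. g j) * (\<Sum>j<n. h j) / (real n)^2)"
  using assms bootE_two_coords[OF assms] bootE_coord[of a n "\<lambda>j. g j * h j"] by auto

lemma wcount_eq_sum: "wcount n j I = (\<Sum>i<n. of_bool (j = I i))"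
  by (simp add: wcount_def atLeast0LessThan Int_def eq_commute[of j])

lemma resamples_less: "I \<in> resamples n \<Longrightarrow> i < n \<Longrightarrow> I i < n"
  by (auto simp: resamples_def PiE_iff)

lemma lincomb_wcount:
  assumes "I \<in> resamples n"
  shows "(\<Sum>k<n. c k * wcount n k I) = (\<Sum>i<n. c (I i))"
proof -
  have "(\<Sum>k<n. c k * wcount n k I) = (\<Sum>k<n. \<Sum>i<n. c k * of_bool (k = I i))"
    by (simp only: wcount_eq_sum sum_distrib_left)
  also have "\<dots> = (\<Sum>i<n. \<Sum>k<n. c k * of_bool (k = I i))"
    by (rule sum.swap)
  also have "\<dots> = (\<Sum>i<n. c (I i))"
    using resamples_less[OF assms] by simp
  finally show ?thesis .
qed

lemma bootE_wcount:
  assumes "j < n"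
  shows "bootE n (wcount n j) = 1"
proof -
  have "bootE n (wcount n j) = (\<Sum>i<n. bootE n (\<lambda>I. of_bool (j = I i)))"
    unfolding wcount_eq_sum by (rule bootE_sum)
  also have "\<dots> = (\<Sum>i<n. 1 / real n)"
    using assms by (intro sum.cong refl) (simp add: bootE_coord[of _ n "\<lambda>k. of_bool (j = k)"])
  finally show ?thesis using assms by simp
qed

lemma bootE_nonneg_eq_0D:
  assumes "\<And>I. I \<in> resamples n \<Longrightarrow> 0 \<le> f I" "bootE n f = 0" "I \<in> resamples n"
  shows "f I = 0"
  using assms by (auto simp: bootE_def sum_nonneg_eq_0_iff)

lemma lincomb_wcount_orthogonal_imp_zero:
  assumes orth: "\<And>j. j < n \<Longrightarrow> bootE n (\<lambda>I. (\<Sum>k<n. d k * wcount n k I) * wcount n j I) = 0"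
    and I: "I \<in> resamples n"
  shows "(\<Sum>k<n. d k * wcount n k I) = 0"
proof -
  define L where "L I = (\<Sum>k<n. d k * wcount n k I)" for I
  have "(L I)^2 = (\<Sum>k<n. d k * (L I * wcount n k I))" for I
  proof -
    have "(L I)^2 = L I * (\<Sum>k<n. d k * wcount n k I)"
      unfolding power2_eq_square by (subst (2) L_def) (rule refl)
    then show ?thesis by (simp add: sum_distrib_left mult.left_commute)
  qed
  then have "bootE n (\<lambda>I. (L I)^2) = (\<Sum>k<n. d k * bootE n (\<lambda>I. L I * wcount n k I))"
    by (simp add: bootE_sum bootE_cmult)
  also have "\<dots> = 0"
    using orth by (simp add: L_def)
  finally have "(L I)^2 = 0"
    by (intro bootE_nonneg_eq_0D[of n "\<lambda>I. (L I)^2", OF _ _ I]) simp_all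
  then show ?thesis by (simp add: L_def)
qed

lemma wproj_eqI:
  assumes normal: "\<And>j. j < n \<Longrightarrow> bootE n (\<lambda>I. (f I - (\<Sum>k<n. c k * wcount n k I)) * wcount n j I) = 0"
  shows "wproj n f = restrict (\<lambda>I. \<Sum>k<n. c k * wcount n k I) (resamples n)"
  unfolding wproj_def
proof (rule the_equality)
  have "bootE n (\<lambda>I. (f I - restrict (\<lambda>I. \<Sum>k<n. c k * wcount n k I) (resamples n) I) * wcount n j I)
      = bootE n (\<lambda>I. (f I - (\<Sum>k<n. c k * wcount n k I)) * wcount n j I)" for j
    by (rule bootE_cong) simp
  then show "restrict (\<lambda>I. \<Sum>k<n. c k * wcount n k I) (resamples n) \<in> wspan n \<and>
      (\<forall>j<n. bootE n (\<lambda>I. (f I - restrict (\<lambda>I. \<Sum>k<n. c k * wcount n k I) (resamples n) I) * wcount n j I) = 0)"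
    using normal by (auto simp: wspan_def)
next
  fix l assume l: "l \<in> wspan n \<and> (\<forall>j<n. bootE n (\<lambda>I. (f I - l I) * wcount n j I) = 0)"
  then obtain d where d: "l = restrict (\<lambda>I. \<Sum>k<n. d k * wcount n k I) (resamples n)"
    by (auto simp: wspan_def)
  have orth_diff: "bootE n (\<lambda>I. (\<Sum>k<n. (c k - d k) * wcount n k I) * wcount n j I) = 0"
    if "j < n" for j
  proof -
    have "bootE n (\<lambda>I. (f I - (\<Sum>k<n. d k * wcount n k I)) * wcount n j I) = 0"
      using l that by (simp add: d bootE_def)
    moreover have "(\<lambda>I. (\<Sum>k<n. (c k - d k) * wcount n k I) * wcount n j I) =
        (\<lambda>I. (f I - (\<Sum>k<n. d k * wcount n k I)) * wcount n j I
            - (f I - (\<Sum>k<n. c k * wcount n k I)) * wcount n j I)"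
      by (simp add: fun_eq_iff algebra_simps sum_subtractf)
    ultimately show ?thesis
      using normal[OF that] by (simp add: bootE_diff)
  qed
  have "(\<Sum>k<n. (c k - d k) * wcount n k I) = 0" if "I \<in> resamples n" for I
    by (rule lincomb_wcount_orthogonal_imp_zero[of n "\<lambda>k. c k - d k"]) (use orth_diff that in auto)
  then have "(\<Sum>k<n. d k * wcount n k I) = (\<Sum>k<n. c k * wcount n k I)" if "I \<in> resamples n" for I
    using that by (simp add: left_diff_distrib sum_subtractf)
  then show "l = restrict (\<lambda>I. \<Sum>k<n. c k * wcount n k I) (resamples n)"
    unfolding d by (intro restrict_ext)
qed

lemma resamples_comp_permutes:
  assumes "p permutes {0..<n}" "I \<in> resamples n"
  shows "I \<circ> p \<in> resamples n"
  using assms permutes_in_image[OF assms(1)] permutes_not_in[OF assms(1)]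
  by (auto simp: resamples_def PiE_iff extensional_def)

lemma bootE_permute:
  assumes p: "p permutes {0..<n}"
  shows "bootE n (\<lambda>I. f (I \<circ> p)) = bootE n f"
proof -
  have "(\<Sum>I\<in>resamples n. f (I \<circ> p)) = (\<Sum>J\<in>resamples n. f J)"
    by (rule sum.reindex_bij_witness[of _ "\<lambda>J. J \<circ> inv p" "\<lambda>I. I \<circ> p"])
      (auto simp: resamples_comp_permutes[OF p] resamples_comp_permutes[OF permutes_inv[OF p]]
        comp_assoc permutes_inv_o[OF p])
  then show ?thesis by (simp add: bootE_def)
qed

lemma bootE_sstar_first_index:
  assumes "j < n"
  shows "bootE n (\<lambda>I. sstar n s x I * of_bool (j = I 0)) = econd n s j x / real n"
proof -
  have "{I \<in> resamples n. I 0 = j} = resamples n \<inter> {I. j = I 0}"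
    by auto
  moreover have "real n ^ n = real n ^ (n - 1) * real n"
    using assms power_minus_mult[of n "real n"] by simp
  ultimately show ?thesis
    by (simp add: bootE_def econd_def)
qed

lemma szero_eq_mean_econd:
  assumes "0 < n"
  shows "szero n s x = (\<Sum>j<n. econd n s j x) / real n"
proof -
  have "szero n s x = bootE n (\<lambda>I. \<Sum>j<n. sstar n s x I * of_bool (j = I 0))"
    unfolding szero_def using assms by (intro bootE_cong) (simp add: resamples_less)
  also have "\<dots> = (\<Sum>j<n. bootE n (\<lambda>I. sstar n s x I * of_bool (j = I 0)))"
    by (rule bootE_sum)
  also have "\<dots> = (\<Sum>j<n. econd n s j x / real n)"
    by (intro sum.cong refl bootE_sstar_first_index) simp
  finally show ?thesis by (simp add: sum_divide_distrib)
qed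

lemma sstar_permute:
  assumes sym: "\<And>x p. p permutes {0..<n} \<Longrightarrow>
      s n (\<lambda>k\<in>{0..<n}. x (p k)) = s n (\<lambda>k\<in>{0..<n}. x k)"
    and p: "p permutes {0..<n}"
  shows "sstar n s x (I \<circ> p) = sstar n s x I"
  using sym[OF p, of "\<lambda>k. x (I k)"] by (simp add: sstar_def)

lemma bootE_sstar_wcount:
  assumes sym: "\<And>x p. p permutes {0..<n} \<Longrightarrow>
      s n (\<lambda>k\<in>{0..<n}. x (p k)) = s n (\<lambda>k\<in>{0..<n}. x k)"
    and j: "j < n"
  shows "bootE n (\<lambda>I. sstar n s x I * wcount n j I) = econd n s j x"
proof -
  have "bootE n (\<lambda>I. sstar n s x I * of_bool (j = I i)) = econd n s j x / real n" if "i < n" for i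
  proof -
    define p where "p = Transposition.transpose 0 i"
    have p: "p permutes {0..<n}"
      using that unfolding p_def by (intro permutes_swap_id) auto
    have "bootE n (\<lambda>I. sstar n s x I * of_bool (j = I i)) =
        bootE n (\<lambda>I. sstar n s x (I \<circ> p) * of_bool (j = (I \<circ> p) 0))"
      using sstar_permute[where s=s and n=n, OF sym p] by (simp add: p_def)
    also have "\<dots> = econd n s j x / real n"
      using bootE_permute[OF p, of "\<lambda>I. sstar n s x I * of_bool (j = I 0)"] bootE_sstar_first_index[OF j]
      by simp
    finally show ?thesis .
  qed
  then have "bootE n (\<lambda>I. sstar n s x I * wcount n j I) = (\<Sum>i<n. econd n s j x / real n)"
    unfolding wcount_eq_sum sum_distrib_left bootE_sum by (intro sum.cong refl) simp
  then show ?thesis using j by simp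
qed

lemma bootE_coord_sum:
  assumes "(\<Sum>k<n. c k) = 0"
  shows "bootE n (\<lambda>I. \<Sum>i<n. c (I i)) = 0"
  using assms by (simp add: bootE_sum bootE_coord)

lemma bootE_coord_sum_sq:
  assumes "(\<Sum>k<n. c k) = 0"
  shows "bootE n (\<lambda>I. (\<Sum>i<n. c (I i))^2) = (\<Sum>k<n. (c k)^2)"
proof -
  have "bootE n (\<lambda>I. (\<Sum>i<n. c (I i))^2) = (\<Sum>a<n. \<Sum>b<n. bootE n (\<lambda>I. c (I a) * c (I b)))"
    by (simp add: power2_eq_square sum_product bootE_sum)
  also have "\<dots> = (\<Sum>a<n. \<Sum>b<n. if a = b then (\<Sum>k<n. (c k)^2) / real n else 0)"
    using assms by (intro sum.cong refl) (simp add: bootE_coord_pair power2_eq_square)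
  finally show ?thesis by simp
qed

lemma bootE_coord_sum_wcount:
  assumes "(\<Sum>k<n. c k) = 0" "j < n"
  shows "bootE n (\<lambda>I. (\<Sum>i<n. c (I i)) * wcount n j I) = c j"
proof -
  have "bootE n (\<lambda>I. (\<Sum>i<n. c (I i)) * wcount n j I) =
      (\<Sum>a<n. \<Sum>b<n. bootE n (\<lambda>I. c (I a) * of_bool (j = I b)))"
    by (simp only: wcount_eq_sum sum_product bootE_sum)
  also have "\<dots> = (\<Sum>a<n. \<Sum>b<n. if a = b then c j / real n else 0)"
  proof (intro sum.cong refl)
    fix a b assume "a \<in> {..<n}" "b \<in> {..<n}"
    then show "bootE n (\<lambda>I. c (I a) * of_bool (j = I b)) = (if a = b then c j / real n else 0)"
      using assms bootE_coord_pair[of a n b c "\<lambda>k. of_bool (j = k)"] by (simp add: eq_commute[of j])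
  qed
  finally show ?thesis using assms by simp
qed

lemma bootVar_cong:
  assumes "\<And>I. I \<in> resamples n \<Longrightarrow> f I = g I"
  shows "bootVar n f = bootVar n g"
proof -
  have "bootE n f = bootE n g"
    using assms by (rule bootE_cong)
  then show ?thesis
    unfolding bootVar_def using assms by (intro bootE_cong) simp
qed

lemma bootVar_lstar:
  assumes sym: "\<And>x p. p permutes {0..<n} \<Longrightarrow>
      s n (\<lambda>k\<in>{0..<n}. x (p k)) = s n (\<lambda>k\<in>{0..<n}. x k)"
    and n: "0 < n"
  shows "bootVar n (lstar n s x) = (\<Sum>j<n. (econd n s j x - szero n s x)^2)"
proof -
  define c where "c j = econd n s j x - szero n s x" for j
  have c_sum: "(\<Sum>j<n. c j) = 0"
    using n by (simp add: c_def sum_subtractf szero_eq_mean_econd)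
  have normal: "bootE n (\<lambda>I. (sstar n s x I - szero n s x - (\<Sum>k<n. c k * wcount n k I)) * wcount n j I) = 0"
    if j: "j < n" for j
  proof -
    have "bootE n (\<lambda>I. (\<Sum>k<n. c k * wcount n k I) * wcount n j I) =
        bootE n (\<lambda>I. (\<Sum>i<n. c (I i)) * wcount n j I)"
      by (intro bootE_cong) (simp add: lincomb_wcount)
    also have "\<dots> = c j"
      by (rule bootE_coord_sum_wcount[OF c_sum j])
    finally have lin: "bootE n (\<lambda>I. (\<Sum>k<n. c k * wcount n k I) * wcount n j I) = c j" .
    show ?thesis
      by (simp add: left_diff_distrib bootE_diff bootE_cmult bootE_sstar_wcount[where s=s and n=n, OF sym j]
          bootE_wcount[OF j] lin)
        (simp add: c_def)
  qed
  have "lstar n s x = restrict (\<lambda>I. \<Sum>k<n. c k * wcount n k I) (resamples n)"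
    unfolding lstar_def by (rule wproj_eqI) (use normal in simp)
  then have "bootVar n (lstar n s x) = bootVar n (\<lambda>I. \<Sum>i<n. c (I i))"
    by (intro bootVar_cong) (simp add: lincomb_wcount)
  also have "\<dots> = (\<Sum>k<n. (c k)^2)"
    by (simp add: bootVar_def bootE_coord_sum[OF c_sum] bootE_coord_sum_sq[OF c_sum])
  finally show ?thesis by (simp add: c_def)
qed

lemma sum_sq_deviations:
  fixes y :: "nat \<Rightarrow> real"
  assumes "0 < n"
  shows "(\<Sum>j<n. (y j - (\<Sum>i<n. y i) / n)^2) = (\<Sum>j<n. (y j)^2) - (\<Sum>i<n. y i)^2 / n"
proof -
  define S where "S = (\<Sum>i<n. y i)"
  have "(\<Sum>j<n. (y j - S / n)^2) = (\<Sum>j<n. (y j)^2 - 2 * (S / n) * y j + (S / n)^2)"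
    by (simp add: power2_diff algebra_simps)
  also have "\<dots> = (\<Sum>j<n. (y j)^2) - 2 * (S / n) * S + n * (S / n)^2"
    by (simp add: sum.distrib sum_subtractf sum_distrib_left S_def)
  also have "\<dots> = (\<Sum>j<n. (y j)^2) - S^2 / n"
    using assms by (simp add: field_simps power2_eq_square)
  finally show ?thesis by (simp add: S_def)
qed

lemma sum_sum_if_eq:
  "(\<Sum>i<n. \<Sum>j<n. if i = j then a else b) = real n * a + real n * (real n - 1) * (b :: real)"
proof -
  have "(\<Sum>j<n. if i = j then a else b) = a + (real n - 1) * b" if "i < n" for i
  proof -
    have "(\<Sum>j<n. if i = j then a else b) = (\<Sum>j<n. b + (if i = j then a - b else 0))"
      by (intro sum.cong) auto
    also have "\<dots> = real n * b + (a - b)" using that by (simp add: sum.distrib)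
    finally show ?thesis by (simp add: algebra_simps)
  qed
  then have "(\<Sum>i<n. \<Sum>j<n. if i = j then a else b) = (\<Sum>i<n. a + (real n - 1) * b)"
    by (intro sum.cong) auto
  then show ?thesis by (simp add: algebra_simps)
qed

lemma integrable_mult_square_integrable:
  fixes f g :: "'a \<Rightarrow> real"
  assumes [measurable]: "f \<in> borel_measurable M" "g \<in> borel_measurable M"
    and "integrable M (\<lambda>x. (f x)^2)" "integrable M (\<lambda>x. (g x)^2)"
  shows "integrable M (\<lambda>x. f x * g x)"
proof (rule Bochner_Integration.integrable_bound)
  show "integrable M (\<lambda>x. (f x)^2 + (g x)^2)"
    using assms by simp
  have "\<bar>f x * g x\<bar> \<le> (f x)^2 + (g x)^2" for x
  proof -
    have "2 * (\<bar>f x\<bar> * \<bar>g x\<bar>) \<le> (f x)^2 + (g x)^2"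
      using sum_squares_bound[of "\<bar>f x\<bar>" "\<bar>g x\<bar>"] by simp
    moreover have "0 \<le> \<bar>f x\<bar> * \<bar>g x\<bar>" by simp
    ultimately have "\<bar>f x\<bar> * \<bar>g x\<bar> \<le> (f x)^2 + (g x)^2" by linarith
    then show ?thesis by (simp add: abs_mult)
  qed
  then show "AE x in M. norm (f x * g x) \<le> norm ((f x)^2 + (g x)^2)"
    by simp
qed simp

lemma (in prob_space) covariance_eq:
  fixes X Y :: "'a \<Rightarrow> real"
  assumes [measurable]: "X \<in> borel_measurable M" "Y \<in> borel_measurable M"
    and "integrable M (\<lambda>x. (X x)^2)" "integrable M (\<lambda>x. (Y x)^2)"
  shows "expectation (\<lambda>x. (X x - expectation X) * (Y x - expectation Y)) =
    expectation (\<lambda>x. X x * Y x) - expectation X * expectation Y"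
proof -
  have [simp]: "integrable M X" "integrable M Y"
    using square_integrable_imp_integrable[OF assms(1,3)] square_integrable_imp_integrable[OF assms(2,4)]
    by simp_all
  have [simp]: "integrable M (\<lambda>x. X x * Y x)"
    using assms by (rule integrable_mult_square_integrable)
  have "(\<lambda>x. (X x - expectation X) * (Y x - expectation Y)) =
      (\<lambda>x. X x * Y x - expectation Y * X x - expectation X * Y x + expectation X * expectation Y)"
    by (simp add: fun_eq_iff algebra_simps)
  then show ?thesis
    by (simp add: prob_space)
qed

context prob_space
begin

context
  fixes Y :: "nat \<Rightarrow> 'a \<Rightarrow> real" and n :: nat and m2 m11 :: real
  assumes rv: "\<And>i. i < n \<Longrightarrow> random_variable borel (Y i)"
    and square_integrable: "\<And>i. i < n \<Longrightarrow> integrable M (\<lambda>x. (Y i x)^2)"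
    and second_moments:
      "\<And>i j. i < n \<Longrightarrow> j < n \<Longrightarrow> expectation (\<lambda>x. Y i x * Y j x) = (if i = j then m2 else m11)"
begin

lemma exchangeable_integrable_prod: "i < n \<Longrightarrow> j < n \<Longrightarrow> integrable M (\<lambda>x. Y i x * Y j x)"
  by (intro integrable_mult_square_integrable rv square_integrable)

lemma exchangeable_integrable: "i < n \<Longrightarrow> integrable M (Y i)"
  using square_integrable_imp_integrable[OF rv square_integrable] .

lemma exchangeable_sum_sq:
  shows "integrable M (\<lambda>x. (\<Sum>i<n. Y i x)^2)"
    and "expectation (\<lambda>x. (\<Sum>i<n. Y i x)^2) = real n * m2 + real n * (real n - 1) * m11"
proof -
  have sq: "(\<lambda>x. (\<Sum>i<n. Y i x)^2) = (\<lambda>x. \<Sum>i<n. \<Sum>j<n. Y i x * Y j x)"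
    by (simp add: fun_eq_iff power2_eq_square sum_product)
  show "integrable M (\<lambda>x. (\<Sum>i<n. Y i x)^2)"
    unfolding sq by (intro Bochner_Integration.integrable_sum exchangeable_integrable_prod) auto
  have "expectation (\<lambda>x. \<Sum>i<n. \<Sum>j<n. Y i x * Y j x) = (\<Sum>i<n. expectation (\<lambda>x. \<Sum>j<n. Y i x * Y j x))"
    by (intro Bochner_Integration.integral_sum Bochner_Integration.integrable_sum exchangeable_integrable_prod) auto
  also have "\<dots> = (\<Sum>i<n. \<Sum>j<n. expectation (\<lambda>x. Y i x * Y j x))"
    by (intro sum.cong refl Bochner_Integration.integral_sum exchangeable_integrable_prod) auto
  also have "\<dots> = (\<Sum>i<n. \<Sum>j<n. if i = j then m2 else m11)"
    by (intro sum.cong refl) (simp add: second_moments)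
  finally show "expectation (\<lambda>x. (\<Sum>i<n. Y i x)^2) = real n * m2 + real n * (real n - 1) * m11"
    unfolding sq sum_sum_if_eq .
qed

lemma exchangeable_variance_mean:
  assumes mean: "\<And>i. i < n \<Longrightarrow> expectation (Y i) = \<mu>" and n: "0 < n"
  shows "variance (\<lambda>x. (\<Sum>i<n. Y i x) / n) = (m2 + (real n - 1) * m11) / n - \<mu>^2"
proof -
  have sum_mean: "expectation (\<lambda>x. \<Sum>i<n. Y i x) = n * \<mu>"
    by (subst Bochner_Integration.integral_sum) (simp_all add: exchangeable_integrable mean)
  have int_mean: "integrable M (\<lambda>x. (\<Sum>i<n. Y i x) / n)"
    by (intro integrable_divide_zero Bochner_Integration.integrable_sum exchangeable_integrable) simp
  have int_mean_sq: "integrable M (\<lambda>x. ((\<Sum>i<n. Y i x) / n)^2)"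
    using exchangeable_sum_sq(1) by (simp add: power_divide)
  have "variance (\<lambda>x. (\<Sum>i<n. Y i x) / n) =
      expectation (\<lambda>x. ((\<Sum>i<n. Y i x) / n)^2) - (expectation (\<lambda>x. (\<Sum>i<n. Y i x) / n))^2"
    by (rule variance_eq[OF int_mean int_mean_sq])
  also have "\<dots> = expectation (\<lambda>x. (\<Sum>i<n. Y i x)^2) / (real n)^2 - (expectation (\<lambda>x. \<Sum>i<n. Y i x) / n)^2"
    by (simp add: power_divide)
  also have "\<dots> = (real n * m2 + real n * (real n - 1) * m11) / (real n)^2 - (real n * \<mu> / n)^2"
    by (simp only: exchangeable_sum_sq(2) sum_mean)
  also have "\<dots> = (m2 + (real n - 1) * m11) / n - \<mu>^2"
    using n by (simp add: field_simps power2_eq_square)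
  finally show ?thesis .
qed

lemma exchangeable_sum_sq_deviations:
  assumes n: "0 < n"
  shows "expectation (\<lambda>x. \<Sum>j<n. (Y j x - (\<Sum>i<n. Y i x) / n)^2) = (real n - 1) * (m2 - m11)"
proof -
  have int_sum: "integrable M (\<lambda>x. \<Sum>j<n. (Y j x)^2)"
    by (intro Bochner_Integration.integrable_sum square_integrable) simp
  have int_sq: "integrable M (\<lambda>x. (\<Sum>i<n. Y i x)^2 / n)"
    using exchangeable_sum_sq(1) by simp
  have "expectation (\<lambda>x. \<Sum>j<n. (Y j x)^2) = (\<Sum>j<n. expectation (\<lambda>x. (Y j x)^2))"
    by (intro Bochner_Integration.integral_sum square_integrable) simp
  also have "\<dots> = n * m2"
    using second_moments[of j j for j] by (simp add: power2_eq_square)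
  finally have sum_sq: "expectation (\<lambda>x. \<Sum>j<n. (Y j x)^2) = n * m2" .
  have "expectation (\<lambda>x. \<Sum>j<n. (Y j x - (\<Sum>i<n. Y i x) / n)^2) =
      expectation (\<lambda>x. \<Sum>j<n. (Y j x)^2) - expectation (\<lambda>x. (\<Sum>i<n. Y i x)^2) / n"
    by (simp add: sum_sq_deviations[OF n] Bochner_Integration.integral_diff[OF int_sum int_sq])
  also have "\<dots> = n * m2 - (real n * m2 + real n * (real n - 1) * m11) / n"
    by (simp only: sum_sq exchangeable_sum_sq(2))
  also have "\<dots> = (real n - 1) * (m2 - m11)"
    using n by (simp add: field_simps)
  finally show ?thesis .
qed

end

end

lemma permute_coords_measurable:
  assumes "p permutes {0..<n}"
  shows "(\<lambda>x. \<lambda>k\<in>{0..<n}. x (p k)) \<in> measurable (dataM D n) (dataM D n)"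
  using permutes_in_image[OF assms] unfolding dataM_def
  by (intro measurable_restrict measurable_component_singleton) auto

lemma econd_permute_coords:
  assumes p: "p permutes {0..<n}" and i: "i < n"
  shows "econd n s i (\<lambda>k\<in>{0..<n}. x (p k)) = econd n s (p i) x"
proof -
  have p_less: "p k < n" if "k < n" for k
    using permutes_in_image[OF p] that by auto
  have inv_less: "inv p k < n" if "k < n" for k
    using permutes_in_image[OF permutes_inv[OF p]] that by auto
  define h where "h I = (\<lambda>k\<in>{0..<n}. p (I k))" for I :: "nat \<Rightarrow> nat"
  define h' where "h' J = (\<lambda>k\<in>{0..<n}. inv p (J k))" for J :: "nat \<Rightarrow> nat"
  have "(\<Sum>I\<in>{I\<in>resamples n. I 0 = i}. sstar n s (\<lambda>k\<in>{0..<n}. x (p k)) I) =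
        (\<Sum>J\<in>{J\<in>resamples n. J 0 = p i}. sstar n s x J)"
  proof (rule sum.reindex_bij_witness[of _ h' h])
    fix I assume I: "I \<in> {I\<in>resamples n. I 0 = i}"
    show "h' (h I) = I"
      using I by (auto simp: h_def h'_def resamples_def PiE_iff permutes_inverses[OF p] extensional_def fun_eq_iff)
    show "h I \<in> {J\<in>resamples n. J 0 = p i}"
      using I i by (auto simp: h_def resamples_def PiE_iff p_less)
    show "sstar n s x (h I) = sstar n s (\<lambda>k\<in>{0..<n}. x (p k)) I"
      using I unfolding sstar_def h_def
      by (intro arg_cong[where f="s n"]) (auto simp: resamples_def PiE_iff fun_eq_iff)
  next
    fix J assume J: "J \<in> {J\<in>resamples n. J 0 = p i}"
    show "h (h' J) = J"
      using J by (auto simp: h_def h'_def resamples_def PiE_iff permutes_inverses[OF p] extensional_def fun_eq_iff)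
    show "h' J \<in> {I\<in>resamples n. I 0 = i}"
      using J i by (auto simp: h'_def resamples_def PiE_iff inv_less permutes_inverses[OF p])
  qed
  then show ?thesis by (simp add: econd_def)
qed

lemma exists_permutes_0_1:
  fixes i j n :: nat
  assumes "i < n" "j < n" "i \<noteq> j"
  obtains p where "p permutes {0..<n}" "p 0 = i" "p 1 = j"
proof
  define t where "t = Transposition.transpose 0 i"
  define q where "q = Transposition.transpose 1 (t j)"
  have t: "t permutes {0..<n}"
    unfolding t_def using assms by (intro permutes_swap_id) auto
  have tj: "t j \<noteq> 0"
    using assms by (auto simp: t_def transpose_eq_iff)
  have "q permutes {0..<n}"
    unfolding q_def using assms permutes_in_image[OF t, of j] by (intro permutes_swap_id) auto
  then show "(t \<circ> q) permutes {0..<n}"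
    using t by (rule permutes_compose)
  show "(t \<circ> q) 0 = i" "(t \<circ> q) 1 = j"
    using tj by (simp_all add: q_def t_def)
qed

context
  fixes D :: "nat \<Rightarrow> real measure" and s :: "nat \<Rightarrow> (nat \<Rightarrow> real) \<Rightarrow> real" and n :: nat
  assumes prob: "prob_space (D n)"
    and borel: "sets (D n) = sets borel"
    and meas: "s n \<in> borel_measurable (PiM {0..<n} (\<lambda>_. borel))"
begin

lemma prob_space_dataM: "prob_space (dataM D n)"
  unfolding dataM_def using prob by (rule prob_space_PiM)

lemma distr_dataM_permute_coords:
  assumes "p permutes {0..<n}"
  shows "distr (dataM D n) (dataM D n) (\<lambda>x. \<lambda>k\<in>{0..<n}. x (p k)) = dataM D n"
  using distr_PiM_reindex[of "{0..<n}" "\<lambda>_. D n" p "{0..<n}"] prob permutes_in_image[OF assms]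
    permutes_inj_on[OF assms]
  by (simp add: dataM_def Pi_iff)

lemma econd_measurable: "econd n s i \<in> borel_measurable (dataM D n)"
proof -
  have sets_eq: "sets (dataM D n) = sets (PiM {0..<n} (\<lambda>_. borel))"
    unfolding dataM_def using borel by (intro sets_PiM_cong) auto
  have "(\<lambda>x. sstar n s x I) \<in> borel_measurable (PiM {0..<n} (\<lambda>_. borel))" if "I \<in> resamples n" for I
    unfolding sstar_def using resamples_less[OF that]
    by (intro measurable_compose[OF _ meas] measurable_restrict measurable_component_singleton) auto
  then have "econd n s i \<in> borel_measurable (PiM {0..<n} (\<lambda>_. borel))"
    unfolding econd_def[abs_def] by (intro borel_measurable_divide borel_measurable_sum) auto
  then show ?thesis
    using measurable_cong_sets[OF sets_eq refl] by blast
qed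

lemma econd_exchangeable:
  fixes h :: "real \<Rightarrow> real \<Rightarrow> real"
  assumes p: "p permutes {0..<n}" and ij: "i < n" "j < n"
    and g: "(\<lambda>x. h (econd n s i x) (econd n s j x)) \<in> borel_measurable (dataM D n)"
  shows "(\<integral>x. h (econd n s (p i) x) (econd n s (p j) x) \<partial>dataM D n) =
      (\<integral>x. h (econd n s i x) (econd n s j x) \<partial>dataM D n)"
    and "integrable (dataM D n) (\<lambda>x. h (econd n s (p i) x) (econd n s (p j) x)) \<longleftrightarrow>
      integrable (dataM D n) (\<lambda>x. h (econd n s i x) (econd n s j x))"
  using integral_distr[OF permute_coords_measurable[OF p] g]
    integrable_distr_eq[OF permute_coords_measurable[OF p] g]
  by (simp_all add: distr_dataM_permute_coords[OF p] econd_permute_coords[OF p] ij)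

lemma econd_exchangeable_single:
  fixes h :: "real \<Rightarrow> real"
  assumes "i < n" and h: "h \<in> borel_measurable borel"
  shows "(\<integral>x. h (econd n s i x) \<partial>dataM D n) = (\<integral>x. h (econd n s 0 x) \<partial>dataM D n)"
    and "integrable (dataM D n) (\<lambda>x. h (econd n s i x)) \<longleftrightarrow> integrable (dataM D n) (\<lambda>x. h (econd n s 0 x))"
proof -
  define p where "p = Transposition.transpose 0 i"
  have p: "p permutes {0..<n}"
    unfolding p_def using assms by (intro permutes_swap_id) auto
  have g: "(\<lambda>x. h (econd n s 0 x)) \<in> borel_measurable (dataM D n)"
    using measurable_compose[OF econd_measurable h] .
  note exch = econd_exchangeable[where h="\<lambda>a b. h a" and i=0 and j=0, OF p _ _ g]
  show "(\<integral>x. h (econd n s i x) \<partial>dataM D n) = (\<integral>x. h (econd n s 0 x) \<partial>dataM D n)"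
    using exch(1) assms by (simp add: p_def)
  show "integrable (dataM D n) (\<lambda>x. h (econd n s i x)) \<longleftrightarrow> integrable (dataM D n) (\<lambda>x. h (econd n s 0 x))"
    using exch(2) assms by (simp add: p_def)
qed

lemma econd_mean: "i < n \<Longrightarrow> (\<integral>x. econd n s i x \<partial>dataM D n) = (\<integral>x. econd n s 0 x \<partial>dataM D n)"
  using econd_exchangeable_single(1)[of i "\<lambda>t. t"] by simp

lemma econd_second_moment:
  assumes ij: "i < n" "j < n"
  shows "(\<integral>x. econd n s i x * econd n s j x \<partial>dataM D n) =
    (if i = j then (\<integral>x. (econd n s 0 x)^2 \<partial>dataM D n) else (\<integral>x. econd n s 0 x * econd n s 1 x \<partial>dataM D n))"
proof (cases "i = j")
  case True
  then show ?thesis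
    using econd_exchangeable_single(1)[of i "\<lambda>t. t^2"] ij by (simp add: power2_eq_square)
next
  case False
  then obtain p where p: "p permutes {0..<n}" "p 0 = i" "p 1 = j"
    using exists_permutes_0_1 ij by blast
  have "1 < n" using ij False by linarith
  moreover have "(\<lambda>x. econd n s 0 x * econd n s 1 x) \<in> borel_measurable (dataM D n)"
    using econd_measurable by simp
  ultimately show ?thesis
    using econd_exchangeable(1)[where h="(*)" and i=0 and j=1, OF p(1)] p False by simp
qed

context
  assumes L2: "integrable (dataM D n) (\<lambda>x. (econd n s 0 x)^2)"
begin

lemma econd_square_integrable: "i < n \<Longrightarrow> integrable (dataM D n) (\<lambda>x. (econd n s i x)^2)"
  using econd_exchangeable_single(2)[of i "\<lambda>t. t^2"] L2 by simp

lemma bootstrap_second_moments: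
  assumes sym: "\<And>x p. p permutes {0..<n} \<Longrightarrow>
      s n (\<lambda>k\<in>{0..<n}. x (p k)) = s n (\<lambda>k\<in>{0..<n}. x k)"
    and n: "2 \<le> n"
  defines "\<sigma>2 \<equiv> dVar (dataM D n) (econd n s 0)"
    and "c \<equiv> dCov (dataM D n) (econd n s 0) (econd n s 1)"
  shows "dE (dataM D n) (\<lambda>x. bootVar n (lstar n s x)) = (real n - 1) * (\<sigma>2 - c)"
    and "dVar (dataM D n) (szero n s) = (\<sigma>2 + (real n - 1) * c) / n"
    and "dVar (dataM D n) (econd n s 1) = \<sigma>2"
proof -
  interpret prob_space "dataM D n"
    by (rule prob_space_dataM)
  define \<mu> where "\<mu> = expectation (econd n s 0)"
  define m2 where "m2 = expectation (\<lambda>x. (econd n s 0 x)^2)"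
  define m11 where "m11 = expectation (\<lambda>x. econd n s 0 x * econd n s 1 x)"
  have n0: "0 < n" and n1: "1 < n"
    using n by simp_all
  note exch_assms = econd_measurable econd_square_integrable
    econd_second_moment[unfolded m2_def[symmetric] m11_def[symmetric]]
  have mean: "i < n \<Longrightarrow> expectation (econd n s i) = \<mu>" for i
    using econd_mean[of i] by (simp add: \<mu>_def)
  have var_e: "dVar (dataM D n) (econd n s i) = m2 - \<mu>^2" if "i < n" for i
    unfolding dVar_def dE_def
    using variance_eq[OF square_integrable_imp_integrable[OF econd_measurable econd_square_integrable[OF that]]
        econd_square_integrable[OF that]]
      mean[OF that] econd_second_moment[OF that that]
    by (simp add: m2_def power2_eq_square)
  have cov: "c = m11 - \<mu>^2"
    unfolding c_def dCov_def dE_def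
    using covariance_eq[of "econd n s 0" "econd n s 1", OF econd_measurable econd_measurable
        econd_square_integrable[OF n0] econd_square_integrable[OF n1]] mean[OF n1]
    by (simp add: m11_def \<mu>_def power2_eq_square)
  have szero_eq: "szero n s = (\<lambda>x. (\<Sum>i<n. econd n s i x) / n)"
    using szero_eq_mean_econd[OF n0] by blast
  have "dE (dataM D n) (\<lambda>x. bootVar n (lstar n s x)) =
      expectation (\<lambda>x. \<Sum>j<n. (econd n s j x - (\<Sum>i<n. econd n s i x) / n)^2)"
    by (simp add: dE_def bootVar_lstar[where s=s and n=n, OF sym n0] szero_eq)
  also have "\<dots> = (real n - 1) * (m2 - m11)"
    using exchangeable_sum_sq_deviations[OF exch_assms n0] .
  finally show "dE (dataM D n) (\<lambda>x. bootVar n (lstar n s x)) = (real n - 1) * (\<sigma>2 - c)"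
    using var_e[OF n0] by (simp add: \<sigma>2_def cov)
  have "dVar (dataM D n) (szero n s) = (m2 + (real n - 1) * m11) / n - \<mu>^2"
    unfolding dVar_def dE_def szero_eq
    using exchangeable_variance_mean[OF exch_assms mean n0] .
  then show "dVar (dataM D n) (szero n s) = (\<sigma>2 + (real n - 1) * c) / n"
    using var_e[OF n0] n0 by (simp add: \<sigma>2_def cov field_simps)
  show "dVar (dataM D n) (econd n s 1) = \<sigma>2"
    using var_e[OF n0] var_e[OF n1] by (simp add: \<sigma>2_def)
qed

end

end

lemma variance_ratio_eq_corr:
  fixes \<sigma>2 c :: real
  assumes \<sigma>2: "\<sigma>2 > 0" and n: "0 < n" and den: "(\<sigma>2 + (real n - 1) * c) / n > 0"
  shows "1 + (real n - 1) * (c / \<sigma>2) > 0"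
    and "(real n - 1) * (\<sigma>2 - c) / ((\<sigma>2 + (real n - 1) * c) / n) =
      real n * (real n - 1) * (1 - c / \<sigma>2) / (1 + (real n - 1) * (c / \<sigma>2))"
proof -
  have den': "\<sigma>2 + (real n - 1) * c > 0"
    using den n by (simp add: zero_less_divide_iff)
  have one_plus: "1 + (real n - 1) * (c / \<sigma>2) = (\<sigma>2 + (real n - 1) * c) / \<sigma>2"
    using \<sigma>2 by (simp add: field_simps)
  then show "1 + (real n - 1) * (c / \<sigma>2) > 0"
    using den' \<sigma>2 by simp
  have one_minus: "1 - c / \<sigma>2 = (\<sigma>2 - c) / \<sigma>2"
    using \<sigma>2 by (simp add: field_simps)
  have "(1 - c / \<sigma>2) / (1 + (real n - 1) * (c / \<sigma>2)) = (\<sigma>2 - c) / (\<sigma>2 + (real n - 1) * c)"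
    unfolding one_plus one_minus using \<sigma>2 by simp
  moreover have "(real n - 1) * (\<sigma>2 - c) / ((\<sigma>2 + (real n - 1) * c) / n) =
      real n * (real n - 1) * ((\<sigma>2 - c) / (\<sigma>2 + (real n - 1) * c))"
    by (simp add: field_simps)
  ultimately show "(real n - 1) * (\<sigma>2 - c) / ((\<sigma>2 + (real n - 1) * c) / n) =
      real n * (real n - 1) * (1 - c / \<sigma>2) / (1 + (real n - 1) * (c / \<sigma>2))"
    by (metis times_divide_eq_right)
qed

lemma tendsto_one_iff_scaled_decorrelation:
  fixes r \<rho> :: "nat \<Rightarrow> real"
  assumes ratio: "\<And>n. 2 \<le> n \<Longrightarrow>
    1 + (real n - 1) * \<rho> n > 0 \<and> r n = real n * (real n - 1) * (1 - \<rho> n) / (1 + (real n - 1) * \<rho> n)"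
  shows "r \<longlonglongrightarrow> 1 \<longleftrightarrow> (\<lambda>n. real n * (1 - \<rho> n)) \<longlonglongrightarrow> 1"
proof -
  define a where "a n = real n * (1 - \<rho> n)" for n
  define q where "q n = (real n - 1) / real n" for n
  define t where "t n = (real n - 1) / (real n)^2" for n
  have q: "q \<longlonglongrightarrow> 1" and t: "t \<longlonglongrightarrow> 0"
    unfolding q_def t_def by real_asymp+
  have r_eq: "1 - t n * a n > 0 \<and> r n = q n * a n / (1 - t n * a n)" if n: "2 \<le> n" for n
  proof -
    have den: "1 + (real n - 1) * \<rho> n = real n * (1 - t n * a n)"
      using n by (simp add: a_def t_def field_simps power2_eq_square)
    then have "1 - t n * a n > 0"
      using ratio[OF n] n by (simp add: zero_less_mult_iff)
    moreover have "r n = q n * a n / (1 - t n * a n)"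
      using ratio[OF n] n unfolding den by (simp add: a_def q_def field_simps)
    ultimately show ?thesis ..
  qed
  have ev: "eventually (\<lambda>n. 2 \<le> n) sequentially"
    by (rule eventually_ge_at_top)
  show ?thesis
    unfolding a_def[symmetric]
  proof
    assume r: "r \<longlonglongrightarrow> 1"
    \<comment> \<open>invert \<open>r = q a / (1 - t a)\<close>\<close>
    have "(\<lambda>n. r n / (q n + t n * r n)) \<longlonglongrightarrow> 1 / (1 + 0 * 1)"
      by (intro tendsto_intros r q t) simp
    moreover have "eventually (\<lambda>n. r n / (q n + t n * r n) = a n) sequentially"
      using ev
    proof eventually_elim
      case (elim n)
      have pos: "1 - t n * a n > 0" and rn: "r n = q n * a n / (1 - t n * a n)"
        using r_eq[OF elim] by auto
      have "q n > 0" using elim by (simp add: q_def)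
      moreover have "q n + t n * r n = q n / (1 - t n * a n)"
        using pos by (simp add: rn field_simps)
      ultimately show ?case
        using pos by (simp add: rn)
    qed
    ultimately show "a \<longlonglongrightarrow> 1"
      by (simp add: Lim_transform_eventually)
  next
    assume a: "a \<longlonglongrightarrow> 1"
    have "(\<lambda>n. q n * a n / (1 - t n * a n)) \<longlonglongrightarrow> 1 * 1 / (1 - 0 * 1)"
      by (intro tendsto_intros a q t) simp
    moreover have "eventually (\<lambda>n. q n * a n / (1 - t n * a n) = r n) sequentially"
      using ev by eventually_elim (use r_eq in simp)
    ultimately show "r \<longlonglongrightarrow> 1"
      by (simp add: Lim_transform_eventually)
  qed
qed

theorem theorem2:
  fixes D :: "nat \<Rightarrow> real measure"
    and s :: "nat \<Rightarrow> (nat \<Rightarrow> real) \<Rightarrow> real"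
  assumes prob: "\<And>n. prob_space (D n)"
    and borel: "\<And>n. sets (D n) = sets borel"
    and meas: "\<And>n. s n \<in> borel_measurable (PiM {0..<n} (\<lambda>_. borel))"
    and sym: "\<And>n x p. p permutes {0..<n} \<Longrightarrow>
               s n (\<lambda>k\<in>{0..<n}. x (p k)) = s n (\<lambda>k\<in>{0..<n}. x k)"
    and e_L2: "\<And>n. n \<ge> 2 \<Longrightarrow> integrable (dataM D n) (\<lambda>x. (econd n s 0 x)^2)"
    and e_pos: "\<And>n. n \<ge> 2 \<Longrightarrow> dVar (dataM D n) (econd n s 0) > 0"
    and s0_pos: "\<And>n. n \<ge> 2 \<Longrightarrow> dVar (dataM D n) (szero n s) > 0"
  shows "((\<lambda>n. dE (dataM D n) (\<lambda>x. bootVar n (lstar n s x)) / dVar (dataM D n) (szero n s))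
            \<longlonglongrightarrow> 1)
     \<longleftrightarrow> ((\<lambda>n. real n * (1 - dCorr (dataM D n) (econd n s 0) (econd n s 1))) \<longlonglongrightarrow> 1)"
proof (rule tendsto_one_iff_scaled_decorrelation)
  fix n :: nat
  assume n: "2 \<le> n"
  let ?M = "dataM D n"
  let ?\<sigma>2 = "dVar ?M (econd n s 0)" and ?c = "dCov ?M (econd n s 0) (econd n s 1)"
  note moments = bootstrap_second_moments[where D=D and s=s and n=n, OF prob borel meas e_L2[OF n] sym n]
  have "dCorr ?M (econd n s 0) (econd n s 1) = ?c / ?\<sigma>2"
    using moments(3) e_pos[OF n] by (simp add: dCorr_def)
  then show "1 + (real n - 1) * dCorr ?M (econd n s 0) (econd n s 1) > 0 \<and>
      dE ?M (\<lambda>x. bootVar n (lstar n s x)) / dVar ?M (szero n s) =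
      real n * (real n - 1) * (1 - dCorr ?M (econd n s 0) (econd n s 1)) /
        (1 + (real n - 1) * dCorr ?M (econd n s 0) (econd n s 1))"
    using variance_ratio_eq_corr[OF e_pos[OF n], of n ?c] moments(1,2) s0_pos[OF n] n by simp
qed

end
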